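(* For every integer $b\geq 2$ there exist graphs $G$ and $H$ such that $\rho(G\square H)-\rho(G)\rho(H)=b$.
   Context: All graphs are finite and simple. A set $P\subseteq V(G)$ is a packing of $G$ if $N[u]\cap N[v]=\emptyset$ for all distinct $u,v\in P$, where $N[u]$ is the closed neighborhood of $u$; the packing number $\rho(G)$ is the maximum cardinality of a packing of $G$. The Cartesian product $G\square H$ has vertex set $V(G)\times V(H)$, with $(g,h)$ adjacent to $(g',h')$ iff ($gg'\in E(G)$ and $h=h'$) or ($g=g'$ and $hh'\in E(H)$). *)

theory Defs
  imports Main
begin

type_synonym 'a graph = "'a set \<times> 'a set set"

definition verts :: "'a graph \<Rightarrow> 'a set" where "verts G = fst G"
definition edges :: "'a graph \<Rightarrow> 'a set set" where "edges G = snd G"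

definition finite_simple_graph :: "'a graph \<Rightarrow> bool" where
  "finite_simple_graph G \<longleftrightarrow> finite (verts G) \<and> verts G \<noteq> {} \<and>
     (\<forall>e\<in>edges G. \<exists>u v. u \<noteq> v \<and> u \<in> verts G \<and> v \<in> verts G \<and> e = {u, v})"

definition adj :: "'a graph \<Rightarrow> 'a \<Rightarrow> 'a \<Rightarrow> bool" where
  "adj G u v \<longleftrightarrow> {u, v} \<in> edges G"

definition closed_nbhd :: "'a graph \<Rightarrow> 'a \<Rightarrow> 'a set" where
  "closed_nbhd G u = {v \<in> verts G. v = u \<or> adj G u v}"

definition is_packing :: "'a graph \<Rightarrow> 'a set \<Rightarrow> bool" where
  "is_packing G P \<longleftrightarrow> P \<subseteq> verts G \<and>
     (\<forall>u\<in>P. \<forall>v\<in>P. u \<noteq> v \<longrightarrow> closed_nbhd G u \<inter> closed_nbhd G v = {})"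

definition packing_number :: "'a graph \<Rightarrow> nat" where
  "packing_number G = Max (card ` {P. is_packing G P})"

definition cart_prod :: "'a graph \<Rightarrow> 'b graph \<Rightarrow> ('a \<times> 'b) graph" where
  "cart_prod G H = (verts G \<times> verts H,
     {{(g, h), (g', h')} | g h g' h'. g \<in> verts G \<and> g' \<in> verts G \<and> h \<in> verts H \<and> h' \<in> verts H \<and>
        ((adj G g g' \<and> h = h') \<or> (g = g' \<and> adj H h h'))})"

end

theory Submission
  imports Defs
begin

text \<open>Take both graphs to be the star with centre 0 and leaves 1, ..., n, where n = b + 1.
Every closed neighbourhood of the star contains the centre, so its packing number is 1. In the
product, the diagonal leaves (i, i) form a packing of size n. Conversely, every closed
neighbourhood of the product contains two vertices of the cross of the 2n + 1 vertices having a
coordinate 0, and the closed neighbourhoods of a packing are disjoint, so a packing has at most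
n vertices.\<close>

lemma packing_number_eqI:
  assumes "finite (verts G)" "is_packing G P" "\<And>Q. is_packing G Q \<Longrightarrow> card Q \<le> card P"
  shows "packing_number G = card P"
proof -
  have "finite {P. is_packing G P}"
    by (rule finite_subset[of _ "Pow (verts G)"]) (use assms(1) in \<open>auto simp: is_packing_def\<close>)
  then show ?thesis
    unfolding packing_number_def using assms by (intro Max_eqI) auto
qed

lemma packing_card_le_by_counting:
  assumes "is_packing G P" "finite D"
    and "\<And>u. u \<in> P \<Longrightarrow> k \<le> card (closed_nbhd G u \<inter> D)"
  shows "k * card P \<le> card D"
proof (cases "finite P")
  case True
  have "k * card P = (\<Sum>u\<in>P. k)" by simp
  also have "\<dots> \<le> (\<Sum>u\<in>P. card (closed_nbhd G u \<inter> D))"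
    by (intro sum_mono assms(3))
  also have "\<dots> = card (\<Union>u\<in>P. closed_nbhd G u \<inter> D)"
    using True assms(1,2) by (intro card_UN_disjoint[symmetric]) (auto simp: is_packing_def)
  also have "\<dots> \<le> card D"
    using assms(2) by (intro card_mono) auto
  finally show ?thesis .
qed simp

lemma adj_sym: "adj G u v \<longleftrightarrow> adj G v u"
  by (simp add: adj_def insert_commute)

lemma verts_cart_prod [simp]: "verts (cart_prod G H) = verts G \<times> verts H"
  by (simp add: cart_prod_def verts_def)

lemma adj_cart_prod_iff:
  "adj (cart_prod G H) (g, h) (g', h') \<longleftrightarrow>
     g \<in> verts G \<and> g' \<in> verts G \<and> h \<in> verts H \<and> h' \<in> verts H \<and>
     ((adj G g g' \<and> h = h') \<or> (g = g' \<and> adj H h h'))"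
  unfolding adj_def[of "cart_prod G H"]
  by (auto simp: cart_prod_def edges_def verts_def doubleton_eq_iff adj_sym[of G] adj_sym[of H])

lemma closed_nbhd_cart_prod:
  assumes "g \<in> verts G" "h \<in> verts H"
  shows "closed_nbhd (cart_prod G H) (g, h) =
           closed_nbhd G g \<times> {h} \<union> {g} \<times> closed_nbhd H h"
  using assms by (auto simp: closed_nbhd_def adj_cart_prod_iff)

definition star :: "nat \<Rightarrow> nat graph" where
  "star n = ({0..n}, {{0, i} | i. i \<in> {1..n}})"

lemma verts_star [simp]: "verts (star n) = {0..n}"
  by (simp add: star_def verts_def)

lemma adj_star_iff: "adj (star n) u v \<longleftrightarrow> (u = 0 \<and> v \<in> {1..n}) \<or> (v = 0 \<and> u \<in> {1..n})"
  unfolding adj_def star_def edges_def by (auto simp: doubleton_eq_iff)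

lemma finite_simple_graph_star: "finite_simple_graph (star n)"
proof -
  have "\<exists>u v. u \<noteq> v \<and> u \<in> {0..n} \<and> v \<in> {0..n} \<and> {0, i} = {u, v}" if "i \<in> {1..n}" for i
    using that by (intro exI[of _ 0] exI[of _ i]) auto
  then show ?thesis
    unfolding finite_simple_graph_def star_def edges_def verts_def by auto
qed

lemma closed_nbhd_star_centre: "closed_nbhd (star n) 0 = {0..n}"
  by (auto simp: closed_nbhd_def adj_star_iff)

lemma closed_nbhd_star_leaf: "i \<in> {1..n} \<Longrightarrow> closed_nbhd (star n) i = {0, i}"
  by (auto simp: closed_nbhd_def adj_star_iff)

lemma closed_nbhd_star_contains_centre: "u \<in> {0..n} \<Longrightarrow> 0 \<in> closed_nbhd (star n) u"
  by (auto simp: closed_nbhd_def adj_star_iff)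

lemma packing_number_star:
  assumes "n \<ge> 1"
  shows "packing_number (star n) = 1"
proof -
  have "card Q \<le> 1" if Q: "is_packing (star n) Q" for Q
  proof -
    have "closed_nbhd (star n) u \<inter> {0} = {0}" if "u \<in> Q" for u
      using that Q closed_nbhd_star_contains_centre[of u n] by (auto simp: is_packing_def)
    then have "1 * card Q \<le> card {0::nat}"
      by (intro packing_card_le_by_counting[OF Q]) simp_all
    then show ?thesis by simp
  qed
  moreover have "is_packing (star n) {0}"
    by (simp add: is_packing_def)
  ultimately show ?thesis
    using packing_number_eqI[of "star n" "{0}"] by simp
qed

lemma diagonal_is_packing:
  "is_packing (cart_prod (star n) (star n)) ((\<lambda>i. (i, i)) ` {1..n})"
  by (auto simp: is_packing_def closed_nbhd_cart_prod closed_nbhd_star_leaf)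

lemma packing_card_le_star_prod:
  assumes "n \<ge> 1" and P: "is_packing (cart_prod (star n) (star n)) P"
  shows "card P \<le> n"
proof -
  define cross where "cross = {0..n} \<times> {0} \<union> {0} \<times> {1..n}"
  have "card cross \<le> 2 * n + 1"
    unfolding cross_def using card_Un_le[of "{0..n} \<times> {0::nat}" "{0::nat} \<times> {1..n}"]
    by (simp add: card_cartesian_product)
  moreover have "2 \<le> card (closed_nbhd (cart_prod (star n) (star n)) u \<inter> cross)"
    if "u \<in> P" for u
  proof -
    obtain x y where u: "u = (x, y)" "x \<in> {0..n}" "y \<in> {0..n}"
      using \<open>u \<in> P\<close> P by (auto simp: is_packing_def)
    let ?N = "closed_nbhd (cart_prod (star n) (star n)) u"
    obtain v w where "v \<noteq> w" "v \<in> ?N \<inter> cross" "w \<in> ?N \<inter> cross"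
    proof (cases "x = 0 \<and> y = 0")
      case True
      then show ?thesis
        using that[of "(0, 0)" "(1, 0)"] u \<open>n \<ge> 1\<close>
        by (simp add: closed_nbhd_cart_prod closed_nbhd_star_centre cross_def)
    next
      case False
      have "0 \<in> closed_nbhd (star n) x" "0 \<in> closed_nbhd (star n) y"
        using u by (simp_all add: closed_nbhd_star_contains_centre)
      with u have "(x, 0) \<in> ?N" "(0, y) \<in> ?N"
        by (simp_all add: closed_nbhd_cart_prod)
      moreover have "(x, 0) \<in> cross" "(0, y) \<in> cross"
        using u by (auto simp: cross_def)
      ultimately show ?thesis
        using that[of "(x, 0)" "(0, y)"] False by auto
    qed
    then have "card {v, w} \<le> card (?N \<inter> cross)"
      by (intro card_mono) (auto simp: cross_def)
    with \<open>v \<noteq> w\<close> show ?thesis by simp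
  qed
  then have "2 * card P \<le> card cross"
    by (intro packing_card_le_by_counting[OF P]) (simp_all add: cross_def)
  ultimately show ?thesis by linarith
qed

lemma packing_number_star_prod:
  assumes "n \<ge> 1"
  shows "packing_number (cart_prod (star n) (star n)) = n"
proof -
  have "card ((\<lambda>i. (i, i)) ` {1..n}) = n"
    by (subst card_image) (auto intro: inj_onI)
  then show ?thesis
    using packing_number_eqI[OF _ diagonal_is_packing] packing_card_le_star_prod[OF assms]
    by simp
qed

theorem mainTheorem1:
  fixes b :: int
  assumes "b \<ge> 2"
  shows "\<exists>(G :: nat graph) (H :: nat graph).
           finite_simple_graph G \<and> finite_simple_graph H \<and>
           int (packing_number (cart_prod G H)) - int (packing_number G) * int (packing_number H) = b"
proof (intro exI conjI)
  let ?n = "nat b + 1"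
  show "finite_simple_graph (star ?n)" by (rule finite_simple_graph_star)
  then show "finite_simple_graph (star ?n)" .
  show "int (packing_number (cart_prod (star ?n) (star ?n)))
          - int (packing_number (star ?n)) * int (packing_number (star ?n)) = b"
    using assms by (simp add: packing_number_star_prod packing_number_star)
qed

end
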